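(* Let $s\ge2$ groups of positive integer moduli be given: Group $j$ ($1\le j\le s$) consists of $L_j\ge1$ moduli $0<M_{j,1}<\dots<M_{j,L_j}$; put $\delta_j=\operatorname{lcm}(M_{j,1},\dots,M_{j,L_j})$, assumed pairwise distinct. Let $T_1,\dots,T_k$ ($k\ge2$) be nonempty subsets of $\{1,\dots,s\}$ whose union is $\{1,\dots,s\}$ (the second-stage groups), let $\xi_t=\operatorname{lcm}\{\delta_j:j\in T_t\}$, assumed pairwise distinct. Let $N$ be an integer with $0\le N<\operatorname{lcm}(\delta_1,\dots,\delta_s)$, let $r_{j,i}$ be the remainder of $N$ modulo $M_{j,i}$ and $n_{j,i}=(N-r_{j,i})/M_{j,i}$. Define $G_j=\max_{i}\min_{q\ne i}\gcd(M_{j,i},M_{j,q})/4$ if $L_j\ge2$ and $G_j=M_{j,1}/4$ if $L_j=1$; $\Upsilon_t=\max_{a\in T_t}\min_{b\in T_t,b\ne a}\gcd(\delta_a,\delta_b)/4$ if $|T_t|\ge2$ and $\Upsilon_t=\delta_a/4$ if $T_t=\{a\}$; and $\Upsilon=\max_{1\le i\le k}\min_{q\ne i}\gcd(\xi_i,\xi_q)/4$. Let $\tilde r_{j,i}$ be integers with $0\le\tilde r_{j,i}\le M_{j,i}-1$ and $|\tilde r_{j,i}-r_{j,i}|\le\tau_j$ for all $i,j$, where $$\tau_j<\min\Big(G_j,\ \min\{\Upsilon_t: j\in T_t\},\ \Upsilon\Big)\quad(1\le j\le s).$$ Then the three-stage algorithm (described in the context) outputs $\hat n_{j,i}=n_{j,i}$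 for all $i,j$, and its estimate $\hat N=\left[\frac1{\sum_jL_j}\sum_{j=1}^s\sum_{i=1}^{L_j}(\hat n_{j,i}M_{j,i}+\tilde r_{j,i})\right]$ satisfies $|\hat N-N|\le\left[\frac{\sum_{j=1}^sL_j\tau_j}{\sum_{j=1}^sL_j}\right]$.
   Context: For $x\in\mathbb R$, $[x]$ denotes the unique integer with $-1/2\le x-[x]<1/2$. Single-stage algorithm $\mathcal A$: for pairwise distinct positive integers $P_1,\dots,P_m$ ($m\ge2$), a reference index $k$ and integers $x_1,\dots,x_m$: for $i\ne k$ put $m_{ki}=\gcd(P_k,P_i)$, $\Gamma_{ki}=P_k/m_{ki}$, $\Gamma_{ik}=P_i/m_{ki}$, $\hat q_{ik}=[(x_i-x_k)/m_{ki}]$, let $\bar\Gamma_{ki}$ be an inverse of $\Gamma_{ki}$ modulo $\Gamma_{ik}$ and $\hat\xi_{ik}\equiv\hat q_{ik}\bar\Gamma_{ki}\pmod{\Gamma_{ik}}$, $0\le\hat\xi_{ik}<\Gamma_{ik}$; let $\hat n_k$ be the least nonnegative $y$ with $y\equiv\hat\xi_{ik}\pmod{\Gamma_{ik}}$ for all $i\ne k$ (the algorithm fails if none exists), and $\hat n_i=(\hat n_k\Gamma_{ki}-\hat q_{ik})/\Gamma_{ik}$ for $i\ne k$. In each use below the reference index is one attaining the relevant max-min of pairwise gcds. Three-stage algorithm: Stage 1: for each $j$, if $L_j\ge2$ apply $\mathcal A$ to $M_{j,1},\dots,M_{j,L_j}$ with inputs $\tilde r_{j,i}$, obtaining $\hat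 K_{j,i}$; if $L_j=1$ set $\hat K_{j,1}=0$; put $\hat N_j=[\frac1{L_j}\sum_i(\hat K_{j,i}M_{j,i}+\tilde r_{j,i})]$. Stage 2: for each $t$, if $|T_t|\ge2$ apply $\mathcal A$ to the moduli $(\delta_j)_{j\in T_t}$ with inputs $(\hat N_j)_{j\in T_t}$, obtaining $\hat H_{t,j}$ ($j\in T_t$); if $|T_t|=1$ set $\hat H_{t,j}=0$; put $\hat P_t=[\frac1{|T_t|}\sum_{j\in T_t}(\hat H_{t,j}\delta_j+\hat N_j)]$. Stage 3: apply $\mathcal A$ to $\xi_1,\dots,\xi_k$ with inputs $\hat P_1,\dots,\hat P_k$, obtaining $\hat l_1,\dots,\hat l_k$. Output, for each $j$ and a $t$ with $j\in T_t$, $\hat n_{j,i}=\hat l_t\xi_t/M_{j,i}+\hat H_{t,j}\delta_j/M_{j,i}+\hat K_{j,i}$. *)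

theory Defs
  imports "HOL-Number_Theory.Number_Theory"
begin

text \<open>Rounding: [x] is the unique integer with -1/2 <= x - [x] < 1/2.\<close>
definition rnd :: "real \<Rightarrow> int" where
  "rnd x = \<lfloor>x + 1/2\<rfloor>"

definition maxmin_gcd :: "'a set \<Rightarrow> ('a \<Rightarrow> int) \<Rightarrow> int" where
  "maxmin_gcd I P = Max ((\<lambda>a. Min ((\<lambda>b. gcd (P a) (P b)) ` (I - {a}))) ` I)"

definition ref_ok :: "'a set \<Rightarrow> ('a \<Rightarrow> int) \<Rightarrow> 'a \<Rightarrow> bool" where
  "ref_ok I P k \<longleftrightarrow> k \<in> I \<and> Min ((\<lambda>b. gcd (P k) (P b)) ` (I - {k})) = maxmin_gcd I P"

text \<open>Single-stage algorithm A on index set I, moduli P, inputs x, reference index k.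
  None means the algorithm fails.\<close>
definition algA :: "'a set \<Rightarrow> ('a \<Rightarrow> int) \<Rightarrow> ('a \<Rightarrow> int) \<Rightarrow> 'a \<Rightarrow> ('a \<Rightarrow> int) option" where
  "algA I P x k =
    (let m = (\<lambda>i. gcd (P k) (P i));
         Gki = (\<lambda>i. P k div m i);
         Gik = (\<lambda>i. P i div m i);
         q = (\<lambda>i. rnd (of_int (x i - x k) / of_int (m i)));
         binv = (\<lambda>i. SOME y. [Gki i * y = 1] (mod Gik i));
         xi = (\<lambda>i. (q i * binv i) mod Gik i);
         good = (\<lambda>y::nat. \<forall>i\<in>I - {k}. [int y = xi i] (mod Gik i))
     in if (\<exists>y. good y) then
          (let nk = int (LEAST y. good y)
           in Some (\<lambda>i. if i = k then nk else (nk * Gki i - q i) div Gik i))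
        else None)"

definition delta :: "(nat \<Rightarrow> nat) \<Rightarrow> (nat \<Rightarrow> nat \<Rightarrow> int) \<Rightarrow> nat \<Rightarrow> int" where
  "delta L M j = Lcm (M j ` {1..L j})"

definition xi :: "(nat \<Rightarrow> nat) \<Rightarrow> (nat \<Rightarrow> nat \<Rightarrow> int) \<Rightarrow> (nat \<Rightarrow> nat set) \<Rightarrow> nat \<Rightarrow> int" where
  "xi L M T t = Lcm (delta L M ` T t)"

definition stage1 :: "(nat \<Rightarrow> nat) \<Rightarrow> (nat \<Rightarrow> nat \<Rightarrow> int) \<Rightarrow> (nat \<Rightarrow> nat \<Rightarrow> int)
    \<Rightarrow> (nat \<Rightarrow> nat) \<Rightarrow> nat \<Rightarrow> (nat \<Rightarrow> int) option" where
  "stage1 L M rt k1 j =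
     (if L j \<ge> 2 then algA {1..L j} (M j) (rt j) (k1 j) else Some (\<lambda>_. 0))"

definition Khat :: "(nat \<Rightarrow> nat) \<Rightarrow> (nat \<Rightarrow> nat \<Rightarrow> int) \<Rightarrow> (nat \<Rightarrow> nat \<Rightarrow> int)
    \<Rightarrow> (nat \<Rightarrow> nat) \<Rightarrow> nat \<Rightarrow> nat \<Rightarrow> int" where
  "Khat L M rt k1 j = the (stage1 L M rt k1 j)"

definition Nhat :: "(nat \<Rightarrow> nat) \<Rightarrow> (nat \<Rightarrow> nat \<Rightarrow> int) \<Rightarrow> (nat \<Rightarrow> nat \<Rightarrow> int)
    \<Rightarrow> (nat \<Rightarrow> nat) \<Rightarrow> nat \<Rightarrow> int" where
  "Nhat L M rt k1 j =
     rnd ((\<Sum>i=1..L j. real_of_int (Khat L M rt k1 j i * M j i + rt j i)) / real (L j))"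

definition stage2 :: "(nat \<Rightarrow> nat) \<Rightarrow> (nat \<Rightarrow> nat \<Rightarrow> int) \<Rightarrow> (nat \<Rightarrow> nat \<Rightarrow> int)
    \<Rightarrow> (nat \<Rightarrow> nat) \<Rightarrow> (nat \<Rightarrow> nat set) \<Rightarrow> (nat \<Rightarrow> nat) \<Rightarrow> nat \<Rightarrow> (nat \<Rightarrow> int) option" where
  "stage2 L M rt k1 T k2 t =
     (if card (T t) \<ge> 2 then algA (T t) (delta L M) (Nhat L M rt k1) (k2 t) else Some (\<lambda>_. 0))"

definition Hhat :: "(nat \<Rightarrow> nat) \<Rightarrow> (nat \<Rightarrow> nat \<Rightarrow> int) \<Rightarrow> (nat \<Rightarrow> nat \<Rightarrow> int)
    \<Rightarrow> (nat \<Rightarrow> nat) \<Rightarrow> (nat \<Rightarrow> nat set) \<Rightarrow> (nat \<Rightarrow> nat) \<Rightarrow> nat \<Rightarrow> nat \<Rightarrow> int" where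
  "Hhat L M rt k1 T k2 t = the (stage2 L M rt k1 T k2 t)"

definition Phat :: "(nat \<Rightarrow> nat) \<Rightarrow> (nat \<Rightarrow> nat \<Rightarrow> int) \<Rightarrow> (nat \<Rightarrow> nat \<Rightarrow> int)
    \<Rightarrow> (nat \<Rightarrow> nat) \<Rightarrow> (nat \<Rightarrow> nat set) \<Rightarrow> (nat \<Rightarrow> nat) \<Rightarrow> nat \<Rightarrow> int" where
  "Phat L M rt k1 T k2 t =
     rnd ((\<Sum>j\<in>T t. real_of_int (Hhat L M rt k1 T k2 t j * delta L M j + Nhat L M rt k1 j))
          / real (card (T t)))"

text \<open>Stage 3 (K = number k of second-stage groups).\<close>
definition stage3 :: "(nat \<Rightarrow> nat) \<Rightarrow> (nat \<Rightarrow> nat \<Rightarrow> int) \<Rightarrow> (nat \<Rightarrow> nat \<Rightarrow> int)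
    \<Rightarrow> (nat \<Rightarrow> nat) \<Rightarrow> nat \<Rightarrow> (nat \<Rightarrow> nat set) \<Rightarrow> (nat \<Rightarrow> nat) \<Rightarrow> nat \<Rightarrow> (nat \<Rightarrow> int) option" where
  "stage3 L M rt k1 K T k2 k3 = algA {1..K} (xi L M T) (Phat L M rt k1 T k2) k3"

definition three_stage_succeeds :: "nat \<Rightarrow> (nat \<Rightarrow> nat) \<Rightarrow> (nat \<Rightarrow> nat \<Rightarrow> int) \<Rightarrow> (nat \<Rightarrow> nat \<Rightarrow> int)
    \<Rightarrow> (nat \<Rightarrow> nat) \<Rightarrow> nat \<Rightarrow> (nat \<Rightarrow> nat set) \<Rightarrow> (nat \<Rightarrow> nat) \<Rightarrow> nat \<Rightarrow> bool" where
  "three_stage_succeeds s L M rt k1 K T k2 k3 \<longleftrightarrow>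
     (\<forall>j\<in>{1..s}. stage1 L M rt k1 j \<noteq> None) \<and>
     (\<forall>t\<in>{1..K}. stage2 L M rt k1 T k2 t \<noteq> None) \<and>
     stage3 L M rt k1 K T k2 k3 \<noteq> None"

text \<open>Output nhat_{j,i} computed via second-stage group t (with j in T_t).
  The quotients xi_t/M_{j,i} and delta_j/M_{j,i} are exact integers.\<close>
definition nhat :: "(nat \<Rightarrow> nat) \<Rightarrow> (nat \<Rightarrow> nat \<Rightarrow> int) \<Rightarrow> (nat \<Rightarrow> nat \<Rightarrow> int)
    \<Rightarrow> (nat \<Rightarrow> nat) \<Rightarrow> nat \<Rightarrow> (nat \<Rightarrow> nat set) \<Rightarrow> (nat \<Rightarrow> nat) \<Rightarrow> nat
    \<Rightarrow> nat \<Rightarrow> nat \<Rightarrow> nat \<Rightarrow> int" where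
  "nhat L M rt k1 K T k2 k3 t j i =
     the (stage3 L M rt k1 K T k2 k3) t * (xi L M T t div M j i)
     + Hhat L M rt k1 T k2 t j * (delta L M j div M j i)
     + Khat L M rt k1 j i"

text \<open>Final estimate of N, using for each j the group tsel j containing j.\<close>
definition Nest :: "nat \<Rightarrow> (nat \<Rightarrow> nat) \<Rightarrow> (nat \<Rightarrow> nat \<Rightarrow> int) \<Rightarrow> (nat \<Rightarrow> nat \<Rightarrow> int)
    \<Rightarrow> (nat \<Rightarrow> nat) \<Rightarrow> nat \<Rightarrow> (nat \<Rightarrow> nat set) \<Rightarrow> (nat \<Rightarrow> nat) \<Rightarrow> nat \<Rightarrow> (nat \<Rightarrow> nat) \<Rightarrow> int" where
  "Nest s L M rt k1 K T k2 k3 tsel =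
     rnd ((\<Sum>j=1..s. \<Sum>i=1..L j.
            real_of_int (nhat L M rt k1 K T k2 k3 (tsel j) j i * M j i + rt j i))
          / real (\<Sum>j=1..s. L j))"

end

theory Submission
  imports Defs
begin

text \<open>Algorithm A is exact on residues perturbed by small errors: rounding
  (x i - x k) / gcd (P k) (P i) recovers the difference of the exact quotients, and the resulting
  congruences determine X div P k modulo every P i div gcd (P k) (P i), hence up to a multiple of
  Lcm / P k, which the range of X excludes. So the three stages return the exact quotients of
  N mod \<delta> j, of N mod \<xi> t and of N. Averaging the reconstructed values keeps the errors of
  the estimates of N mod \<delta> j and N mod \<xi> t below the largest \<tau> j involved, which is what the
  next stage tolerates. The quotients of the three levels compose along M j i | \<delta> j | \<xi> t to
  N div M j i, and the final estimate is N plus the rounded average of the residue errors.\<close>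

section \<open>Rounding\<close>

lemma rnd_add_int: "rnd (of_int z + x) = z + rnd x"
  unfolding rnd_def by (metis add.assoc add.commute floor_add_int)

lemma rnd_of_int: "rnd (of_int z) = z"
  using rnd_add_int[of z 0] by (simp add: rnd_def)

lemma rnd_eq_0: "\<bar>x\<bar> < 1/2 \<Longrightarrow> rnd x = 0"
  unfolding rnd_def by (simp add: floor_eq_iff) linarith

lemma rnd_mono: "x \<le> y \<Longrightarrow> rnd x \<le> rnd y"
  unfolding rnd_def by (simp add: floor_mono)

lemma rnd_abs_le_rnd: "\<bar>x\<bar> \<le> y \<Longrightarrow> \<bar>rnd x\<bar> \<le> rnd y"
proof -
  assume xy: "\<bar>x\<bar> \<le> y"
  have "- rnd y \<le> rnd (- y)"
    unfolding rnd_def by linarith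
  also have "\<dots> \<le> rnd x" using xy by (intro rnd_mono) auto
  finally show ?thesis using rnd_mono[of x y] xy by (auto simp: abs_le_iff)
qed

lemma rnd_abs_le_of_int: "\<bar>x\<bar> \<le> of_int z \<Longrightarrow> \<bar>rnd x\<bar> \<le> z"
  using rnd_abs_le_rnd[of x "of_int z"] by (simp add: rnd_of_int)

lemma rnd_quotient_near_multiple:
  fixes D d m :: int
  assumes "0 < m" "2 * \<bar>d\<bar> < m"
  shows "rnd (of_int (D * m + d) / of_int m) = D"
proof -
  have "of_int (D * m + d) / of_int m = of_int D + real_of_int d / of_int m"
    using assms(1) by (simp add: field_simps)
  moreover have "\<bar>real_of_int d / of_int m\<bar> < 1/2"
  proof -
    have "2 * \<bar>real_of_int d\<bar> < of_int m" using assms(2) by linarith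
    thus ?thesis using assms(1) by (simp add: field_simps)
  qed
  ultimately show ?thesis by (simp add: rnd_add_int rnd_eq_0)
qed

text \<open>Since the deviations are integers, the bound c may be replaced by its floor, which
  survives averaging and rounding.\<close>
lemma rnd_average_near:
  fixes v :: "'a \<Rightarrow> int"
  assumes "finite A" "A \<noteq> {}" "\<And>i. i \<in> A \<Longrightarrow> \<bar>real_of_int (v i - y)\<bar> \<le> c"
  shows "\<bar>real_of_int (rnd ((\<Sum>i\<in>A. real_of_int (v i)) / card A) - y)\<bar> \<le> c"
proof -
  have v_le: "\<bar>real_of_int (v i - y)\<bar> \<le> of_int \<lfloor>c\<rfloor>" if "i \<in> A" for i
    using assms(3)[OF that] by (metis le_floor_iff of_int_abs of_int_le_iff)
  have "(\<Sum>i\<in>A. real_of_int (v i)) / card A = of_int y + (\<Sum>i\<in>A. real_of_int (v i - y)) / card A"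
    using assms(1,2) by (simp add: sum_subtractf field_simps)
  hence shift: "rnd ((\<Sum>i\<in>A. real_of_int (v i)) / card A) - y
      = rnd ((\<Sum>i\<in>A. real_of_int (v i - y)) / card A)"
    by (simp add: rnd_add_int)
  have "\<bar>\<Sum>i\<in>A. real_of_int (v i - y)\<bar> \<le> (\<Sum>i\<in>A. of_int \<lfloor>c\<rfloor>)"
    by (rule order_trans[OF sum_abs sum_mono]) (rule v_le)
  hence "\<bar>(\<Sum>i\<in>A. real_of_int (v i - y)) / card A\<bar> \<le> of_int \<lfloor>c\<rfloor>"
    using assms(1,2) by (simp add: divide_le_eq mult.commute)
  hence "\<bar>rnd ((\<Sum>i\<in>A. real_of_int (v i)) / card A) - y\<bar> \<le> \<lfloor>c\<rfloor>"
    unfolding shift by (rule rnd_abs_le_of_int)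
  thus ?thesis by (metis le_floor_iff of_int_abs)
qed

section \<open>Algorithm A\<close>

lemma dvd_mult_if_div_gcd_dvd:
  fixes a b d :: int
  assumes "b div gcd a b dvd d"
  shows "b dvd d * a"
  by (metis assms dvd_div_mult_self gcd_dvd1 gcd_dvd2 mult_dvd_mono)

lemma cong_mult_inverse_mod:
  fixes a b u n r :: int
  assumes "[a * u = 1] (mod b)"
  shows "[n = (n * a - r * b) * u mod b] (mod b)"
proof -
  have "[n * (a * u) = n * 1] (mod b)" using assms by (rule cong_scalar_left)
  moreover have "[n * (a * u) = (n * a - r * b) * u] (mod b)"
    unfolding cong_iff_dvd_diff by (simp add: algebra_simps)
  ultimately show ?thesis by (simp add: cong_def)
qed

lemma rnd_diff_residues:
  fixes X a b e e' :: int
  assumes "0 < a" "2 * \<bar>e' - e\<bar> < gcd a b"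
  shows "rnd (of_int ((X mod b + e') - (X mod a + e)) / of_int (gcd a b))
    = X div a * (a div gcd a b) - X div b * (b div gcd a b)"
proof -
  have quot: "X div a * (a div gcd a b) * gcd a b = X div a * a"
    "X div b * (b div gcd a b) * gcd a b = X div b * b"
    by simp_all
  have "(X mod b + e') - (X mod a + e)
      = (X div a * (a div gcd a b) - X div b * (b div gcd a b)) * gcd a b + (e' - e)"
    unfolding left_diff_distrib quot by (simp add: minus_div_mult_eq_mod[symmetric])
  moreover have "0 < gcd a b" using assms(1) by simp
  ultimately show ?thesis using rnd_quotient_near_multiple assms(2) by presburger
qed

text \<open>Otherwise (n - y) * P k would be a positive common multiple of the P i below their Lcm.\<close>
lemma cong_quotient_unique:
  fixes P :: "'a \<Rightarrow> int" and y n :: int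
  assumes "0 < P k" "0 \<le> y" "y \<le> n" "n * P k < Lcm (P ` I)"
    and cong: "\<And>i. i \<in> I - {k} \<Longrightarrow> [y = n] (mod P i div gcd (P k) (P i))"
  shows "y = n"
proof (rule ccontr)
  assume "y \<noteq> n"
  hence pos: "0 < (n - y) * P k" using assms(1,3) by simp
  have "P i dvd (n - y) * P k" if "i \<in> I" for i
  proof (cases "i = k")
    case False
    thus ?thesis using cong[of i] that
      by (intro dvd_mult_if_div_gcd_dvd) (simp add: cong_iff_dvd_diff dvd_diff_commute)
  qed simp
  hence "Lcm (P ` I) dvd (n - y) * P k" by (intro Lcm_least) auto
  hence "Lcm (P ` I) \<le> (n - y) * P k" using pos by (rule zdvd_imp_le)
  moreover have "(n - y) * P k \<le> n * P k" using assms(1,2) by simp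
  ultimately show False using assms(4) by linarith
qed

lemma algA_correct:
  fixes P x e :: "'a \<Rightarrow> int" and X :: int
  assumes P_pos: "\<And>i. i \<in> I \<Longrightarrow> 0 < P i" and k: "k \<in> I"
    and X: "0 \<le> X" "X < Lcm (P ` I)"
    and x: "\<And>i. i \<in> I \<Longrightarrow> x i = X mod P i + e i"
    and err: "\<And>i. i \<in> I - {k} \<Longrightarrow> 2 * \<bar>e i - e k\<bar> < gcd (P k) (P i)"
  shows "\<exists>f. algA I P x k = Some f \<and> (\<forall>i\<in>I. f i = X div P i)"
proof -
  define Gki where "Gki = (\<lambda>i. P k div gcd (P k) (P i))"
  define Gik where "Gik = (\<lambda>i. P i div gcd (P k) (P i))"
  define q where "q = (\<lambda>i. rnd (of_int (x i - x k) / of_int (gcd (P k) (P i))))"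
  define binv where "binv = (\<lambda>i. SOME y. [Gki i * y = 1] (mod Gik i))"
  define good where "good = (\<lambda>y::nat. \<forall>i\<in>I - {k}. [int y = (q i * binv i) mod Gik i] (mod Gik i))"
  define n where "n = (\<lambda>i. X div P i)"
  have Pk: "0 < P k" using P_pos k .
  have nk: "0 \<le> n k" unfolding n_def using X(1) Pk by (simp add: pos_imp_zdiv_nonneg_iff)
  have Gik_pos: "0 < Gik i" if "i \<in> I - {k}" for i
    using P_pos[of i] that by (simp add: Gik_def pos_imp_zdiv_pos_iff zdvd_imp_le)
  have q: "q i = n k * Gki i - n i * Gik i" if "i \<in> I - {k}" for i
    using rnd_diff_residues[OF Pk err[OF that], of X] x[OF k] x[of i] that
    by (simp add: q_def n_def Gki_def Gik_def)
  have nk_cong: "[n k = (q i * binv i) mod Gik i] (mod Gik i)" if "i \<in> I - {k}" for i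
  proof -
    have "coprime (Gki i) (Gik i)"
      unfolding Gki_def Gik_def using Pk by (intro div_gcd_coprime) auto
    hence "[Gki i * binv i = 1] (mod Gik i)"
      unfolding binv_def by (rule someI_ex[OF cong_solve_coprime_int])
    thus ?thesis unfolding q[OF that] by (rule cong_mult_inverse_mod)
  qed
  have good_nk: "good (nat (n k))"
    unfolding good_def using nk nk_cong by (simp add: cong_sym_eq)
  have least: "int (LEAST y. good y) = n k"
  proof (rule cong_quotient_unique[where P = P and k = k and I = I, OF Pk])
    show "int (LEAST y. good y) \<le> n k" using Least_le[of good, OF good_nk] nk by linarith
    show "n k * P k < Lcm (P ` I)"
      using X Pk unfolding n_def by (metis div_mult_mod_eq le_add_same_cancel1 pos_mod_sign order.strict_trans1)
    show "[int (LEAST y. good y) = n k] (mod P i div gcd (P k) (P i))" if "i \<in> I - {k}" for i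
      using LeastI[of good, OF good_nk] nk_cong[OF that] that unfolding good_def Gik_def
      by (meson cong_sym cong_trans)
  qed simp
  have "algA I P x k = (if \<exists>y. good y then Some (\<lambda>i. if i = k then int (LEAST y. good y)
      else (int (LEAST y. good y) * Gki i - q i) div Gik i) else None)"
    unfolding algA_def Let_def good_def binv_def q_def Gik_def Gki_def ..
  hence "algA I P x k = Some (\<lambda>i. if i = k then n k else (n k * Gki i - q i) div Gik i)"
    using good_nk least by auto
  moreover have "(n k * Gki i - q i) div Gik i = n i" if "i \<in> I - {k}" for i
    using q[OF that] Gik_pos[OF that] by simp
  ultimately show ?thesis unfolding n_def by auto
qed

lemma maxmin_gcd_le_gcd:
  assumes "finite I" "ref_ok I P k" "i \<in> I - {k}"
  shows "maxmin_gcd I P \<le> gcd (P k) (P i)"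
  using assms Min_le[of "(\<lambda>b. gcd (P k) (P b)) ` (I - {k})"] unfolding ref_ok_def by auto

text \<open>Errors below a quarter of the max-min gcd differ pairwise by less than half of every gcd
  with the reference modulus, which is what algA_correct needs.\<close>
lemma algA_robust:
  fixes P x e :: "'a \<Rightarrow> int" and X :: int and c :: "'a \<Rightarrow> real"
  assumes "finite I" "ref_ok I P k" and P_pos: "\<And>i. i \<in> I \<Longrightarrow> 0 < P i"
    and X: "0 \<le> X" "X < Lcm (P ` I)"
    and x: "\<And>i. i \<in> I \<Longrightarrow> x i = X mod P i + e i"
    and e_le: "\<And>i. i \<in> I \<Longrightarrow> \<bar>real_of_int (e i)\<bar> \<le> c i"
    and c_lt: "\<And>i. i \<in> I \<Longrightarrow> c i < real_of_int (maxmin_gcd I P) / 4"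
  shows "\<exists>f. algA I P x k = Some f \<and> (\<forall>i\<in>I. f i = X div P i)"
proof (rule algA_correct[OF P_pos _ X x])
  show k: "k \<in> I" using assms(2) unfolding ref_ok_def by simp
  fix i assume i: "i \<in> I - {k}"
  have "2 * \<bar>real_of_int (e i) - real_of_int (e k)\<bar> < real_of_int (maxmin_gcd I P)"
    using e_le[of i] e_le[OF k] c_lt[of i] c_lt[OF k] i by (simp add: abs_if split: if_split_asm)
  also have "\<dots> \<le> real_of_int (gcd (P k) (P i))"
    using maxmin_gcd_le_gcd[OF assms(1,2) i] by simp
  finally have "real_of_int (2 * \<bar>e i - e k\<bar>) < real_of_int (gcd (P k) (P i))"
    by simp
  thus "2 * \<bar>e i - e k\<bar> < gcd (P k) (P i)" by (simp only: of_int_less_iff)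
qed

section \<open>The three-stage algorithm\<close>

lemma Lcm_pos_int:
  fixes A :: "int set"
  assumes "finite A" "\<And>a. a \<in> A \<Longrightarrow> 0 < a"
  shows "0 < Lcm A"
proof -
  have "Lcm A \<noteq> 0" using Lcm_0_iff[OF assms(1)] assms(2) by blast
  thus ?thesis using Lcm_int_greater_eq_0[of A] by linarith
qed

lemma pos_if_increasing_from_pos:
  fixes f :: "nat \<Rightarrow> 'a::linorder"
  assumes "\<And>i. 1 \<le> i \<Longrightarrow> i < n \<Longrightarrow> f i < f (i + 1)" "c < f 1" "i \<in> {1..n}"
  shows "c < f i"
proof -
  have "1 \<le> i" "i \<le> n" using assms(3) by auto
  thus ?thesis
  proof (induction i rule: dec_induct)
    case base show ?case by (rule assms(2))
  next
    case (step i) thus ?case using assms(1)[of i] by simp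
  qed
qed

lemma div_divisor_chain:
  fixes N a b c :: int
  assumes "0 < c" "c dvd b" "b dvd a"
  shows "N div a * (a div c) + N mod a div b * (b div c) + N mod b div c = N div c"
proof -
  obtain a' b' where a': "a = c * a'" and b': "b = c * b'"
    using assms(2,3) by (meson dvd_trans dvdE)
  have "N = N div a * a + N mod a div b * b + N mod b div c * c + N mod c"
    using assms(2,3) by (smt (verit) div_mod_decomp_int mod_mod_cancel)
  hence "N = c * (N div a * a' + N mod a div b * b' + N mod b div c) + N mod c"
    unfolding a' b' by (simp add: algebra_simps)
  hence "N div c = N div a * a' + N mod a div b * b' + N mod b div c"
    using assms(1) by (metis int_div_pos_eq mod_int_pos_iff pos_mod_bound)
  thus ?thesis using assms(1) by (simp add: a' b')
qed

locale three_stage =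
  fixes s K :: nat and L :: "nat \<Rightarrow> nat" and M :: "nat \<Rightarrow> nat \<Rightarrow> int"
    and T :: "nat \<Rightarrow> nat set" and N :: int and rt :: "nat \<Rightarrow> nat \<Rightarrow> int"
    and tau :: "nat \<Rightarrow> real" and k1 k2 :: "nat \<Rightarrow> nat" and k3 :: nat
  assumes L_pos: "\<And>j. j \<in> {1..s} \<Longrightarrow> 1 \<le> L j"
    and M_pos: "\<And>j i. j \<in> {1..s} \<Longrightarrow> i \<in> {1..L j} \<Longrightarrow> 0 < M j i"
    and T_nonempty: "\<And>t. t \<in> {1..K} \<Longrightarrow> T t \<noteq> {}"
    and T_subset: "\<And>t. t \<in> {1..K} \<Longrightarrow> T t \<subseteq> {1..s}"
    and T_cover: "(\<Union>t\<in>{1..K}. T t) = {1..s}"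
    and N_nonneg: "0 \<le> N" and N_less: "N < Lcm (delta L M ` {1..s})"
    and rt_err: "\<And>j i. j \<in> {1..s} \<Longrightarrow> i \<in> {1..L j} \<Longrightarrow>
      \<bar>real_of_int (rt j i - N mod M j i)\<bar> \<le> tau j"
    and tau_stage1: "\<And>j. j \<in> {1..s} \<Longrightarrow> 2 \<le> L j \<Longrightarrow>
      tau j < real_of_int (maxmin_gcd {1..L j} (M j)) / 4"
    and tau_stage2: "\<And>t j. t \<in> {1..K} \<Longrightarrow> 2 \<le> card (T t) \<Longrightarrow> j \<in> T t \<Longrightarrow>
      tau j < real_of_int (maxmin_gcd (T t) (delta L M)) / 4"
    and tau_stage3: "\<And>j. j \<in> {1..s} \<Longrightarrow>
      tau j < real_of_int (maxmin_gcd {1..K} (xi L M T)) / 4"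
    and k1_ok: "\<And>j. j \<in> {1..s} \<Longrightarrow> 2 \<le> L j \<Longrightarrow> ref_ok {1..L j} (M j) (k1 j)"
    and k2_ok: "\<And>t. t \<in> {1..K} \<Longrightarrow> 2 \<le> card (T t) \<Longrightarrow> ref_ok (T t) (delta L M) (k2 t)"
    and k3_ok: "ref_ok {1..K} (xi L M T) k3"
begin

abbreviation \<delta> where "\<delta> \<equiv> delta L M"
abbreviation \<xi> where "\<xi> \<equiv> xi L M T"

lemma finite_T: "t \<in> {1..K} \<Longrightarrow> finite (T t)"
  using T_subset finite_subset by blast

lemma delta_pos: "j \<in> {1..s} \<Longrightarrow> 0 < \<delta> j"
  unfolding delta_def using M_pos by (intro Lcm_pos_int) auto

lemma M_dvd_delta: "i \<in> {1..L j} \<Longrightarrow> M j i dvd \<delta> j"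
  unfolding delta_def by (rule dvd_Lcm) simp

lemma xi_pos:
  assumes "t \<in> {1..K}"
  shows "0 < \<xi> t"
  unfolding xi_def
proof (rule Lcm_pos_int)
  show "finite (\<delta> ` T t)" using finite_T[OF assms] by simp
  show "0 < d" if "d \<in> \<delta> ` T t" for d
    using that T_subset[OF assms] delta_pos by blast
qed

lemma delta_dvd_xi: "j \<in> T t \<Longrightarrow> \<delta> j dvd \<xi> t"
  unfolding xi_def by (rule dvd_Lcm) simp

lemma N_less_Lcm_xi: "N < Lcm (\<xi> ` {1..K})"
proof -
  have "Lcm (\<delta> ` {1..s}) dvd Lcm (\<xi> ` {1..K})"
  proof (rule Lcm_least)
    fix d assume "d \<in> \<delta> ` {1..s}"
    then obtain j where "j \<in> {1..s}" "d = \<delta> j" by blast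
    moreover from this obtain t where "t \<in> {1..K}" "j \<in> T t" using T_cover by blast
    ultimately show "d dvd Lcm (\<xi> ` {1..K})" by (meson delta_dvd_xi dvd_Lcm dvd_trans imageI)
  qed
  moreover have "0 < Lcm (\<xi> ` {1..K})" using xi_pos by (intro Lcm_pos_int) auto
  ultimately show ?thesis using N_less zdvd_imp_le by fastforce
qed

lemma stage1_correct:
  assumes j: "j \<in> {1..s}"
  shows "stage1 L M rt k1 j \<noteq> None \<and>
    (\<forall>i\<in>{1..L j}. Khat L M rt k1 j i = N mod \<delta> j div M j i)"
proof (cases "2 \<le> L j")
  case True
  have "\<exists>f. algA {1..L j} (M j) (rt j) (k1 j) = Some f \<and>
      (\<forall>i\<in>{1..L j}. f i = N mod \<delta> j div M j i)"
  proof (rule algA_robust[where e = "\<lambda>i. rt j i - N mod M j i" and c = "\<lambda>_. tau j"])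
    show "ref_ok {1..L j} (M j) (k1 j)" using k1_ok j True .
    show "N mod \<delta> j < Lcm (M j ` {1..L j})"
      using delta_pos[OF j] unfolding delta_def by simp
  qed (use j True M_pos delta_pos rt_err tau_stage1 M_dvd_delta in \<open>auto simp: mod_mod_cancel\<close>)
  thus ?thesis using True by (auto simp: stage1_def Khat_def)
next
  case False
  hence "L j = 1" using L_pos[OF j] by simp
  moreover have "\<delta> j = M j 1" using M_pos[OF j] \<open>L j = 1\<close> by (simp add: delta_def)
  ultimately show ?thesis using M_pos[OF j] by (simp add: stage1_def Khat_def)
qed

lemma Nhat_error:
  assumes j: "j \<in> {1..s}"
  shows "\<bar>real_of_int (Nhat L M rt k1 j - N mod \<delta> j)\<bar> \<le> tau j"
proof -
  have "\<bar>real_of_int (Khat L M rt k1 j i * M j i + rt j i - N mod \<delta> j)\<bar> \<le> tau j"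
    if i: "i \<in> {1..L j}" for i
  proof -
    have "N mod \<delta> j div M j i * M j i = N mod \<delta> j - N mod M j i"
      using M_dvd_delta[OF i] by (metis add_diff_cancel_right' div_mult_mod_eq mod_mod_cancel)
    hence "Khat L M rt k1 j i * M j i + rt j i - N mod \<delta> j = rt j i - N mod M j i"
      using stage1_correct[OF j] i by simp
    thus ?thesis using rt_err[OF j i] by (simp only:)
  qed
  thus ?thesis
    unfolding Nhat_def
    using rnd_average_near[of "{1..L j}" "\<lambda>i. Khat L M rt k1 j i * M j i + rt j i"] L_pos[OF j]
    by simp
qed

lemma stage2_correct:
  assumes t: "t \<in> {1..K}"
  shows "stage2 L M rt k1 T k2 t \<noteq> None \<and>
    (\<forall>j\<in>T t. Hhat L M rt k1 T k2 t j = N mod \<xi> t div \<delta> j)"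
proof (cases "2 \<le> card (T t)")
  case True
  have "\<exists>f. algA (T t) \<delta> (Nhat L M rt k1) (k2 t) = Some f \<and>
      (\<forall>j\<in>T t. f j = N mod \<xi> t div \<delta> j)"
  proof (rule algA_robust[where e = "\<lambda>j. Nhat L M rt k1 j - N mod \<delta> j" and c = tau])
    show "ref_ok (T t) \<delta> (k2 t)" using k2_ok t True .
    show "N mod \<xi> t < Lcm (\<delta> ` T t)" using xi_pos[OF t] unfolding xi_def by simp
  qed (use t True finite_T T_subset[OF t] delta_pos xi_pos Nhat_error tau_stage2 delta_dvd_xi
       in \<open>auto simp: mod_mod_cancel subset_iff\<close>)
  thus ?thesis using True by (auto simp: stage2_def Hhat_def)
next
  case False
  hence "card (T t) = 1" using T_nonempty[OF t] finite_T[OF t]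
    by (metis One_nat_def card_0_eq less_2_cases not_le_imp_less)
  then obtain a where "T t = {a}" by (rule card_1_singletonE)
  moreover have "0 < \<delta> a" using T_subset[OF t] \<open>T t = {a}\<close> delta_pos by auto
  ultimately show ?thesis using False by (simp add: stage2_def Hhat_def xi_def)
qed

lemma Phat_error:
  assumes t: "t \<in> {1..K}"
  shows "\<bar>real_of_int (Phat L M rt k1 T k2 t - N mod \<xi> t)\<bar> \<le> Max (tau ` T t)"
proof -
  have "\<bar>real_of_int (Hhat L M rt k1 T k2 t j * \<delta> j + Nhat L M rt k1 j - N mod \<xi> t)\<bar>
      \<le> Max (tau ` T t)" if j: "j \<in> T t" for j
  proof -
    have "N mod \<xi> t div \<delta> j * \<delta> j = N mod \<xi> t - N mod \<delta> j"
      using delta_dvd_xi[OF j] by (metis add_diff_cancel_right' div_mult_mod_eq mod_mod_cancel)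
    hence "Hhat L M rt k1 T k2 t j * \<delta> j + Nhat L M rt k1 j - N mod \<xi> t
        = Nhat L M rt k1 j - N mod \<delta> j"
      using stage2_correct[OF t] j by simp
    moreover have "\<bar>real_of_int (Nhat L M rt k1 j - N mod \<delta> j)\<bar> \<le> tau j"
      using Nhat_error T_subset[OF t] j by blast
    moreover have "tau j \<le> Max (tau ` T t)" using finite_T[OF t] j by simp
    ultimately show ?thesis by (simp only:)
  qed
  thus ?thesis
    unfolding Phat_def
    using rnd_average_near[of "T t" "\<lambda>j. Hhat L M rt k1 T k2 t j * \<delta> j + Nhat L M rt k1 j"]
      finite_T[OF t] T_nonempty[OF t]
    by simp
qed

lemma stage3_correct:
  "\<exists>f. stage3 L M rt k1 K T k2 k3 = Some f \<and> (\<forall>t\<in>{1..K}. f t = N div \<xi> t)"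
  unfolding stage3_def
proof (rule algA_robust[where e = "\<lambda>t. Phat L M rt k1 T k2 t - N mod \<xi> t"
      and c = "\<lambda>t. Max (tau ` T t)"])
  show "Max (tau ` T t) < real_of_int (maxmin_gcd {1..K} \<xi>) / 4" if t: "t \<in> {1..K}" for t
  proof -
    have "Max (tau ` T t) \<in> tau ` T t" using finite_T[OF t] T_nonempty[OF t] by simp
    thus ?thesis using T_subset[OF t] tau_stage3 by auto
  qed
qed (use k3_ok xi_pos N_nonneg N_less_Lcm_xi Phat_error in auto)

lemma three_stage_succeeds: "three_stage_succeeds s L M rt k1 K T k2 k3"
  unfolding three_stage_succeeds_def using stage1_correct stage2_correct stage3_correct by auto

lemma nhat_correct:
  assumes "j \<in> {1..s}" "i \<in> {1..L j}" "t \<in> {1..K}" "j \<in> T t"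
  shows "nhat L M rt k1 K T k2 k3 t j i = N div M j i"
proof -
  obtain f where "stage3 L M rt k1 K T k2 k3 = Some f" "\<forall>t\<in>{1..K}. f t = N div \<xi> t"
    using stage3_correct by blast
  hence "nhat L M rt k1 K T k2 k3 t j i
      = N div \<xi> t * (\<xi> t div M j i) + N mod \<xi> t div \<delta> j * (\<delta> j div M j i)
        + N mod \<delta> j div M j i"
    unfolding nhat_def using assms stage1_correct stage2_correct by simp
  also have "\<dots> = N div M j i"
    using assms by (intro div_divisor_chain M_pos M_dvd_delta delta_dvd_xi)
  finally show ?thesis .
qed

lemma Nest_error:
  assumes s: "1 \<le> s" and tsel: "\<And>j. j \<in> {1..s} \<Longrightarrow> tsel j \<in> {1..K} \<and> j \<in> T (tsel j)"
  shows "\<bar>Nest s L M rt k1 K T k2 k3 tsel - N\<bar>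
    \<le> rnd ((\<Sum>j=1..s. real (L j) * tau j) / real (\<Sum>j=1..s. L j))"
proof -
  define e where "e j i = real_of_int (rt j i - N mod M j i)" for j i
  define Lt where "Lt = (\<Sum>j=1..s. L j)"
  have "L 1 \<le> Lt" unfolding Lt_def using s by (intro member_le_sum) auto
  hence Lt_pos: "0 < Lt" using L_pos[of 1] s by simp
  have "real_of_int (nhat L M rt k1 K T k2 k3 (tsel j) j i * M j i + rt j i) = of_int N + e j i"
    if "j \<in> {1..s}" "i \<in> {1..L j}" for j i
  proof -
    have "N div M j i * M j i = N - N mod M j i" by (simp add: minus_mod_eq_div_mult)
    thus ?thesis using nhat_correct[OF that] tsel[OF that(1)] by (simp add: e_def)
  qed
  hence "(\<Sum>j=1..s. \<Sum>i=1..L j.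
      real_of_int (nhat L M rt k1 K T k2 k3 (tsel j) j i * M j i + rt j i))
      = real Lt * of_int N + (\<Sum>j=1..s. \<Sum>i=1..L j. e j i)"
    by (simp add: Lt_def sum.distrib sum_distrib_right)
  moreover have "(real Lt * of_int N + (\<Sum>j=1..s. \<Sum>i=1..L j. e j i)) / Lt
      = of_int N + (\<Sum>j=1..s. \<Sum>i=1..L j. e j i) / Lt"
    using Lt_pos by (simp add: field_simps)
  ultimately have "Nest s L M rt k1 K T k2 k3 tsel - N = rnd ((\<Sum>j=1..s. \<Sum>i=1..L j. e j i) / Lt)"
    unfolding Nest_def Lt_def[symmetric] by (simp add: rnd_add_int)
  moreover have "\<bar>\<Sum>j=1..s. \<Sum>i=1..L j. e j i\<bar> \<le> (\<Sum>j=1..s. real (L j) * tau j)"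
  proof -
    have "\<bar>\<Sum>j=1..s. \<Sum>i=1..L j. e j i\<bar> \<le> (\<Sum>j=1..s. \<Sum>i=1..L j. \<bar>e j i\<bar>)"
      by (rule order_trans[OF sum_abs sum_mono]) (rule sum_abs)
    also have "\<dots> \<le> (\<Sum>j=1..s. \<Sum>i=1..L j. tau j)"
      unfolding e_def using rt_err by (intro sum_mono) auto
    finally show ?thesis by simp
  qed
  hence "\<bar>(\<Sum>j=1..s. \<Sum>i=1..L j. e j i) / Lt\<bar> \<le> (\<Sum>j=1..s. real (L j) * tau j) / Lt"
    by (simp add: divide_right_mono)
  ultimately show ?thesis unfolding Lt_def by (metis rnd_abs_le_rnd)
qed

end

theorem theorem4:
  fixes s K :: nat and L :: "nat \<Rightarrow> nat" and M :: "nat \<Rightarrow> nat \<Rightarrow> int"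
    and T :: "nat \<Rightarrow> nat set" and N :: int and rt :: "nat \<Rightarrow> nat \<Rightarrow> int"
    and tau :: "nat \<Rightarrow> real"
    and k1 k2 :: "nat \<Rightarrow> nat" and k3 :: nat and tsel :: "nat \<Rightarrow> nat"
  assumes s2: "s \<ge> 2"
    and L1: "\<forall>j\<in>{1..s}. L j \<ge> 1"
    and Mpos: "\<forall>j\<in>{1..s}. 0 < M j 1"
    and Mincr: "\<forall>j\<in>{1..s}. \<forall>i. 1 \<le> i \<and> i < L j \<longrightarrow> M j i < M j (i + 1)"
    and delta_dist: "inj_on (delta L M) {1..s}"
    and K2: "K \<ge> 2"
    and T_ne: "\<forall>t\<in>{1..K}. T t \<noteq> {} \<and> T t \<subseteq> {1..s}"
    and T_cover: "(\<Union>t\<in>{1..K}. T t) = {1..s}"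
    and xi_dist: "inj_on (xi L M T) {1..K}"
    and N_range: "0 \<le> N" "N < Lcm (delta L M ` {1..s})"
    and rt_range: "\<forall>j\<in>{1..s}. \<forall>i\<in>{1..L j}. 0 \<le> rt j i \<and> rt j i \<le> M j i - 1"
    and rt_err: "\<forall>j\<in>{1..s}. \<forall>i\<in>{1..L j}. \<bar>real_of_int (rt j i - N mod M j i)\<bar> \<le> tau j"
    and tau_G: "\<forall>j\<in>{1..s}. tau j <
         (if L j \<ge> 2 then real_of_int (maxmin_gcd {1..L j} (M j)) / 4
          else real_of_int (M j 1) / 4)"
    and tau_Ups_t: "\<forall>j\<in>{1..s}. \<forall>t\<in>{1..K}. j \<in> T t \<longrightarrow> tau j <
         (if card (T t) \<ge> 2 then real_of_int (maxmin_gcd (T t) (delta L M)) / 4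
          else real_of_int (delta L M (the_elem (T t))) / 4)"
    and tau_Ups: "\<forall>j\<in>{1..s}. tau j < real_of_int (maxmin_gcd {1..K} (xi L M T)) / 4"
    and k1_ok: "\<forall>j\<in>{1..s}. L j \<ge> 2 \<longrightarrow> ref_ok {1..L j} (M j) (k1 j)"
    and k2_ok: "\<forall>t\<in>{1..K}. card (T t) \<ge> 2 \<longrightarrow> ref_ok (T t) (delta L M) (k2 t)"
    and k3_ok: "ref_ok {1..K} (xi L M T) k3"
    and tsel_ok: "\<forall>j\<in>{1..s}. tsel j \<in> {1..K} \<and> j \<in> T (tsel j)"
  shows "three_stage_succeeds s L M rt k1 K T k2 k3
    \<and> (\<forall>j\<in>{1..s}. \<forall>i\<in>{1..L j}. \<forall>t\<in>{1..K}. j \<in> T t \<longrightarrow>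
          nhat L M rt k1 K T k2 k3 t j i = (N - N mod M j i) div M j i)
    \<and> \<bar>Nest s L M rt k1 K T k2 k3 tsel - N\<bar>
        \<le> rnd ((\<Sum>j=1..s. real (L j) * tau j) / real (\<Sum>j=1..s. L j))"
proof -
  interpret three_stage s K L M T N rt tau k1 k2 k3
  proof unfold_locales
    show "1 \<le> L j" if "j \<in> {1..s}" for j using L1 that by blast
    show "0 < M j i" if "j \<in> {1..s}" "i \<in> {1..L j}" for j i
      using pos_if_increasing_from_pos[of "L j" "M j" 0 i] Mincr Mpos that by blast
    show "tau j < real_of_int (maxmin_gcd {1..L j} (M j)) / 4"
      if "j \<in> {1..s}" "2 \<le> L j" for j
      using tau_G[rule_format, OF that(1)] that(2) by (simp only: if_True)
    show "tau j < real_of_int (maxmin_gcd (T t) (delta L M)) / 4"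
      if "t \<in> {1..K}" "2 \<le> card (T t)" "j \<in> T t" for t j
      using tau_Ups_t T_ne that by fastforce
  qed (use T_ne T_cover N_range rt_err tau_Ups k1_ok k2_ok k3_ok in auto)
  have "nhat L M rt k1 K T k2 k3 t j i = (N - N mod M j i) div M j i"
    if "j \<in> {1..s}" "i \<in> {1..L j}" "t \<in> {1..K}" "j \<in> T t" for j i t
    using nhat_correct[OF that] M_pos[OF that(1,2)] by (simp add: minus_mod_eq_mult_div)
  moreover have "1 \<le> s" using s2 by simp
  ultimately show ?thesis using three_stage_succeeds Nest_error tsel_ok by blast
qed

end
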